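(* Let $\rho\ge 0$ and let $t=(\sqrt{1+8\rho}-1)/(2\rho)$ if $\rho>0$ and $t=2$ if $\rho=0$. Consider the two-dimensional Poisson regression model with interaction at $\boldsymbol{\beta}=(0,-1,-1,-\rho)^\top$ on $\mathcal{X}=[0,\infty)^2$, and let $\xi_t$ be the design assigning equal weights $1/4$ to $(0,0)$, $(2,0)$, $(0,2)$ and $(t,t)$. Then $d((x,0);\xi_t)=d((0,x);\xi_t)\le 0$ for all $x\ge 0$.
   Context: In the model, an observation at setting $\mathbf{x}=(x_1,x_2)$ is Poisson distributed with mean $\lambda(\mathbf{x})=\exp(\mathbf{f}(\mathbf{x})^\top\boldsymbol{\beta})=\exp(-x_1-x_2-\rho x_1x_2)$, where $\mathbf{f}(\mathbf{x})=(1,x_1,x_2,x_1x_2)^\top$. For a design $\xi$ with settings $\mathbf{x}_i$ and weights $w_i$ (nonnegative, summing to $1$), the information matrix is $\mathbf{M}(\xi)=\sum_i w_i\lambda(\mathbf{x}_i)\mathbf{f}(\mathbf{x}_i)\mathbf{f}(\mathbf{x}_i)^\top$, and the deduced sensitivity function is $d(\mathbf{x};\xi)=\mathbf{f}(\mathbf{x})^\top\mathbf{M}(\xi)^{-1}\mathbf{f}(\mathbf{x})/p-1/\lambda(\mathbf{x})$ with $p=4$. *)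

theory Defs
  imports "HOL-Analysis.Analysis"
begin

definition lam :: "real \<Rightarrow> real \<Rightarrow> real \<Rightarrow> real" where
  "lam \<rho> x1 x2 = exp (- x1 - x2 - \<rho> * x1 * x2)"

definition fv :: "real \<Rightarrow> real \<Rightarrow> real^4" where
  "fv x1 x2 = vector [1, x1, x2, x1 * x2]"

definition info_matrix :: "real \<Rightarrow> ((real \<times> real) \<times> real) list \<Rightarrow> real^4^4" where
  "info_matrix \<rho> \<xi> =
     (\<Sum>((x1, x2), w) \<leftarrow> \<xi>. (w * lam \<rho> x1 x2) *\<^sub>R (\<chi> i j. fv x1 x2 $ i * fv x1 x2 $ j))"

definition sens :: "real \<Rightarrow> ((real \<times> real) \<times> real) list \<Rightarrow> real \<Rightarrow> real \<Rightarrow> real" where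
  "sens \<rho> \<xi> x1 x2 =
     (fv x1 x2 \<bullet> (matrix_inv (info_matrix \<rho> \<xi>) *v fv x1 x2)) / 4 - 1 / lam \<rho> x1 x2"

definition t_of :: "real \<Rightarrow> real" where
  "t_of \<rho> = (if \<rho> > 0 then (sqrt (1 + 8 * \<rho>) - 1) / (2 * \<rho>) else 2)"

definition xi_t :: "real \<Rightarrow> ((real \<times> real) \<times> real) list" where
  "xi_t t = [((0, 0), 1/4), ((2, 0), 1/4), ((0, 2), 1/4), ((t, t), 1/4)]"

end

theory Submission
  imports Defs
begin

(* On the axes x1 * x2 = 0, so the intensity there and at the support points (0,0), (2,0),
   (0,2) does not depend on rho.  Since f(x,0) = (1 - x/2) f(0,0) + (x/2) f(2,0), the equation
   M v = f(x,0) has a solution v orthogonal to f(t,t): the fourth support point drops out and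
   f(x,0)' M^-1 f(x,0) / 4 = (1 - x/2)^2 / lam(0,0) + (x/2)^2 / lam(2,0), whatever t <> 0 is,
   and symmetrically on the other axis.  The resulting inequality
   (1 - x/2)^2 + (x/2)^2 e^2 <= e^x follows from the quadratic Taylor bound of exp for x <= 1
   and from the cubic Taylor bound of exp around 2 for x >= 1. *)

lemma matrix_inv_mult_vector_eq:
  fixes A :: "'a::field^'n^'n"
  assumes "invertible A" and "A *v v = f"
  shows "matrix_inv A *v f = v"
proof -
  have "matrix_inv A ** A = mat 1"
    using assms(1) someI_ex[of "\<lambda>B. A ** B = mat 1 \<and> B ** A = mat 1"]
    unfolding invertible_def matrix_inv_def by blast
  then show ?thesis
    using assms(2) by (metis matrix_vector_mul_assoc matrix_vector_mul_lid)
qed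

lemma invertible_iff_ker_trivial:
  fixes A :: "'a::field^'n^'n"
  shows "invertible A \<longleftrightarrow> (\<forall>z. A *v z = 0 \<longrightarrow> z = 0)"
  by (simp add: invertible_left_inverse matrix_left_invertible_ker)

lemma outer_product_mult_vector:
  fixes f z :: "real^'n"
  shows "(\<chi> i j. f $ i * f $ j) *v z = (f \<bullet> z) *\<^sub>R f"
  by (simp add: vec_eq_iff matrix_vector_mult_def inner_vec_def sum_distrib_left algebra_simps)

lemma info_matrix_mult_vector:
  "info_matrix \<rho> \<xi> *v z =
     (\<Sum>((x1, x2), w) \<leftarrow> \<xi>. (w * lam \<rho> x1 x2 * (fv x1 x2 \<bullet> z)) *\<^sub>R fv x1 x2)"
proof (induction \<xi>)
  case Nil
  then show ?case by (simp add: info_matrix_def)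
next
  case (Cons p \<xi>)
  obtain x1 x2 w where "p = ((x1, x2), w)"
    by (metis prod.exhaust)
  with Cons show ?case
    by (simp add: info_matrix_def matrix_vector_mult_add_rdistrib
        scaleR_matrix_vector_assoc[symmetric] outer_product_mult_vector)
qed

lemma fv_inner: "fv a b \<bullet> z = z$1 + a * z$2 + b * z$3 + a * b * z$4"
  by (simp add: fv_def vector_def inner_vec_def sum_4)

lemma info_matrix_xi_t_mult_vector:
  "info_matrix \<rho> (xi_t t) *v z =
     (lam \<rho> 0 0 / 4 * (fv 0 0 \<bullet> z)) *\<^sub>R fv 0 0 + (lam \<rho> 2 0 / 4 * (fv 2 0 \<bullet> z)) *\<^sub>R fv 2 0
   + (lam \<rho> 0 2 / 4 * (fv 0 2 \<bullet> z)) *\<^sub>R fv 0 2 + (lam \<rho> t t / 4 * (fv t t \<bullet> z)) *\<^sub>R fv t t"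
  by (simp add: info_matrix_mult_vector xi_t_def add.assoc)

lemma lam_pos: "lam \<rho> a b > 0"
  by (simp add: lam_def)

lemma invertible_info_matrix_xi_t:
  assumes "t \<noteq> 0"
  shows "invertible (info_matrix \<rho> (xi_t t))"
  unfolding invertible_iff_ker_trivial
proof (intro allI impI)
  fix z :: "real^4"
  assume "info_matrix \<rho> (xi_t t) *v z = 0"
  let ?q = "\<lambda>a b. lam \<rho> a b / 4 * (fv a b \<bullet> z)\<^sup>2"
  have "z \<bullet> (info_matrix \<rho> (xi_t t) *v z) = 0"
    using \<open>info_matrix \<rho> (xi_t t) *v z = 0\<close> by simp
  moreover have "z \<bullet> (info_matrix \<rho> (xi_t t) *v z) = ?q 0 0 + ?q 2 0 + ?q 0 2 + ?q t t"
    unfolding info_matrix_xi_t_mult_vector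
    by (simp add: inner_add_right inner_commute power2_eq_square)
  moreover have "?q a b \<ge> 0" for a b
    using lam_pos[of \<rho> a b] by simp
  ultimately have "?q 0 0 = 0" "?q 2 0 = 0" "?q 0 2 = 0" "?q t t = 0"
    by (smt (verit))+
  then have "fv 0 0 \<bullet> z = 0" "fv 2 0 \<bullet> z = 0" "fv 0 2 \<bullet> z = 0" "fv t t \<bullet> z = 0"
    using lam_pos[of \<rho>] by (simp_all add: less_imp_neq[symmetric])
  then show "z = 0"
    using assms by (simp add: fv_inner vec_eq_iff forall_4)
qed

lemma exists_xi_t_dual_vector:
  fixes c :: "real \<Rightarrow> real \<Rightarrow> real"
  assumes "t \<noteq> 0"
  obtains v where "fv 0 0 \<bullet> v = c 0 0" "fv 2 0 \<bullet> v = c 2 0" "fv 0 2 \<bullet> v = c 0 2"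
    "fv t t \<bullet> v = c t t"
proof
  define v :: "real^4" where "v = vector [c 0 0, (c 2 0 - c 0 0) / 2, (c 0 2 - c 0 0) / 2,
    (c t t - c 0 0 - t * (c 2 0 - c 0 0) / 2 - t * (c 0 2 - c 0 0) / 2) / t\<^sup>2]"
  have v: "v $ 1 = c 0 0" "v $ 2 = (c 2 0 - c 0 0) / 2" "v $ 3 = (c 0 2 - c 0 0) / 2"
    "v $ 4 = (c t t - c 0 0 - t * (c 2 0 - c 0 0) / 2 - t * (c 0 2 - c 0 0) / 2) / t\<^sup>2"
    by (simp_all add: v_def vector_def)
  show "fv 0 0 \<bullet> v = c 0 0" "fv 2 0 \<bullet> v = c 2 0" "fv 0 2 \<bullet> v = c 0 2"
    "fv t t \<bullet> v = c t t"
    using assms by (simp_all add: fv_inner v field_simps power2_eq_square)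
qed

lemma sens_xi_t_on_segment:
  assumes "t \<noteq> 0" and p: "(p1, p2) \<in> {(2, 0), (0, 2)}"
    and ab: "fv a b = (1 - s) *\<^sub>R fv 0 0 + s *\<^sub>R fv p1 p2"
  shows "sens \<rho> (xi_t t) a b = (1 - s)\<^sup>2 / lam \<rho> 0 0 + s\<^sup>2 / lam \<rho> p1 p2 - 1 / lam \<rho> a b"
proof -
  define c where "c x1 x2 =
    (if (x1, x2) = (0, 0) then 4 * (1 - s) / lam \<rho> 0 0
     else if (x1, x2) = (p1, p2) then 4 * s / lam \<rho> p1 p2 else 0)" for x1 x2
  obtain v where v: "fv 0 0 \<bullet> v = c 0 0" "fv 2 0 \<bullet> v = c 2 0" "fv 0 2 \<bullet> v = c 0 2"
    "fv t t \<bullet> v = c t t"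
    using exists_xi_t_dual_vector[OF assms(1)] by blast
  have "info_matrix \<rho> (xi_t t) *v v = fv a b"
    using assms v lam_pos[of \<rho>] unfolding info_matrix_xi_t_mult_vector c_def
    by (auto simp: less_imp_neq[symmetric])
  then have inv: "matrix_inv (info_matrix \<rho> (xi_t t)) *v fv a b = v"
    by (rule matrix_inv_mult_vector_eq[OF invertible_info_matrix_xi_t[OF assms(1)]])
  have "fv a b \<bullet> v = (1 - s) * (fv 0 0 \<bullet> v) + s * (fv p1 p2 \<bullet> v)"
    using ab by (simp add: inner_add_left)
  also have "\<dots> = 4 * ((1 - s)\<^sup>2 / lam \<rho> 0 0 + s\<^sup>2 / lam \<rho> p1 p2)"
    using p v lam_pos[of \<rho>] by (auto simp: c_def field_simps power2_eq_square)
  finally show ?thesis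
    unfolding sens_def inv by (simp add: mult.commute)
qed

lemma sens_xi_t_axes:
  assumes "t \<noteq> 0"
  shows "sens \<rho> (xi_t t) x 0 = (1 - x / 2)\<^sup>2 + (x / 2)\<^sup>2 * exp 2 - exp x"
    and "sens \<rho> (xi_t t) 0 x = (1 - x / 2)\<^sup>2 + (x / 2)\<^sup>2 * exp 2 - exp x"
proof -
  have lam_axes: "lam \<rho> 0 0 = 1" "lam \<rho> 2 0 = 1 / exp 2" "lam \<rho> 0 2 = 1 / exp 2"
    "lam \<rho> x 0 = 1 / exp x" "lam \<rho> 0 x = 1 / exp x"
    by (simp_all add: lam_def exp_minus inverse_eq_divide)
  have "sens \<rho> (xi_t t) x 0 =
      (1 - x / 2)\<^sup>2 / lam \<rho> 0 0 + (x / 2)\<^sup>2 / lam \<rho> 2 0 - 1 / lam \<rho> x 0"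
    by (rule sens_xi_t_on_segment[OF assms]) (simp_all add: fv_def vec_eq_iff forall_4 vector_def)
  moreover have "sens \<rho> (xi_t t) 0 x =
      (1 - x / 2)\<^sup>2 / lam \<rho> 0 0 + (x / 2)\<^sup>2 / lam \<rho> 0 2 - 1 / lam \<rho> 0 x"
    by (rule sens_xi_t_on_segment[OF assms]) (simp_all add: fv_def vec_eq_iff forall_4 vector_def)
  ultimately show "sens \<rho> (xi_t t) x 0 = (1 - x / 2)\<^sup>2 + (x / 2)\<^sup>2 * exp 2 - exp x"
    and "sens \<rho> (xi_t t) 0 x = (1 - x / 2)\<^sup>2 + (x / 2)\<^sup>2 * exp 2 - exp x"
    by (simp_all only: lam_axes divide_divide_eq_right mult_1_left div_by_1)
qed

lemma exp_lower_Taylor_cubic: "1 + y + y\<^sup>2 / 2 + y ^ 3 / 6 \<le> exp (y :: real)"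
proof -
  obtain u where "exp y = (\<Sum>m<4. y ^ m / fact m) + exp u / fact 4 * y ^ 4"
    using Maclaurin_exp_le[of y 4] by blast
  moreover have "(\<Sum>m<4. y ^ m / fact m) = 1 + y + y\<^sup>2 / 2 + y ^ 3 / 6"
    by (simp add: eval_nat_numeral fact_numeral)
  moreover have "exp u / fact 4 * y ^ 4 \<ge> 0"
    by (simp add: zero_le_even_power)
  ultimately show ?thesis by linarith
qed

lemma axis_interpolant_le_exp:
  assumes x: "(x :: real) \<ge> 0"
  shows "(1 - x / 2)\<^sup>2 + (x / 2)\<^sup>2 * exp 2 \<le> exp x"
proof -
  define E where "E = exp (2 :: real)"
  have E_le: "E \<le> 9"
  proof -
    have "E = exp 1 * exp 1" unfolding E_def by (simp flip: exp_add)
    also have "\<dots> \<le> 3 * 3" using exp_le by (intro mult_mono) auto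
    finally show ?thesis by simp
  qed
  have E_ge: "E \<ge> 3"
    using exp_lower_Taylor_quadratic[of 2] unfolding E_def by simp
  show ?thesis
  proof (cases "x \<le> 1")
    case True
    have "x * (E - 1) \<le> 1 * 8"
      using True E_le E_ge x by (intro mult_mono) auto
    then have "x * (x * (E - 1)) \<le> x * 8"
      using x by (simp add: mult_left_mono)
    then have "(1 - x / 2)\<^sup>2 + (x / 2)\<^sup>2 * E \<le> 1 + x + x\<^sup>2 / 2"
      by (simp add: power2_eq_square field_simps)
    then show ?thesis
      using exp_lower_Taylor_quadratic[OF x] unfolding E_def by linarith
  next
    case False
    define y where "y = x - 2"
    have "(1 - x / 2)\<^sup>2 + (x / 2)\<^sup>2 * E =
        E * (1 + y + y\<^sup>2 / 2 + y ^ 3 / 6) - y\<^sup>2 * ((E - 1) / 4 + E * y / 6)"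
      unfolding y_def by (simp add: power2_eq_square power3_eq_cube field_simps)
    also have "\<dots> \<le> E * (1 + y + y\<^sup>2 / 2 + y ^ 3 / 6)"
    proof -
      have "E * (y + 1) \<ge> 0"
        using False E_ge unfolding y_def by simp
      then have "(E - 1) / 4 + E * y / 6 \<ge> 0"
        using E_ge by (simp add: field_simps)
      then show ?thesis by simp
    qed
    also have "\<dots> \<le> E * exp y"
      using exp_lower_Taylor_cubic[of y] E_ge by (intro mult_left_mono) auto
    also have "\<dots> = exp x"
      unfolding E_def y_def by (simp flip: exp_add)
    finally show ?thesis unfolding E_def .
  qed
qed

lemma t_of_pos:
  assumes "\<rho> \<ge> 0"
  shows "t_of \<rho> > 0"
proof (cases "\<rho> > 0")
  case True
  then have "sqrt (1 + 8 * \<rho>) > 1" by simp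
  with True show ?thesis unfolding t_of_def by simp
next
  case False
  then show ?thesis unfolding t_of_def by simp
qed

theorem lemma3:
  fixes \<rho> x :: real
  assumes "\<rho> \<ge> 0" and "x \<ge> 0"
  shows "sens \<rho> (xi_t (t_of \<rho>)) x 0 = sens \<rho> (xi_t (t_of \<rho>)) 0 x \<and>
         sens \<rho> (xi_t (t_of \<rho>)) x 0 \<le> 0"
proof -
  have "t_of \<rho> \<noteq> 0"
    using t_of_pos[OF assms(1)] by simp
  then show ?thesis
    using sens_xi_t_axes axis_interpolant_le_exp[OF assms(2)] by simp
qed

end
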